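(* Let $K=(K_{xy})$ be a real $n\times n$ matrix and define the matrix $\mathcal D=(d_{xy})$ by $$\mathcal D=\tfrac12\big(\operatorname{diag}(K)\cdot\mathbf 1^T+\mathbf 1\cdot\operatorname{diag}(K)^T\big)-K,$$ i.e. $d_{xy}=\tfrac12(K_{xx}+K_{yy})-K_{xy}$, where $\operatorname{diag}(K)$ is the column vector of diagonal entries of $K$ and $\mathbf 1=(1,\dots,1)^T$. If $\mathcal D$ has a negative entry, or if $\sqrt{d_{xy}}+\sqrt{d_{yz}}<\sqrt{d_{xz}}$ for some $x,y,z\in\{1,\dots,n\}$, then the function $\kappa(x,y)=K_{xy}$, $x,y\in\{1,\dots,n\}$, is not a proximity on $\{1,\dots,n\}$.
   Context: A proximity measure (proximity) on a set $A$ is a function $\kappa:A\times A\to\mathbb R$ satisfying the triangle inequality for proximities: for all $x,y,z\in A$, $\kappa(x,y)+\kappa(x,z)-\kappa(y,z)\le\kappa(x,x)$, and if $z=y$ and $y\neq x$ then this inequality is strict. *)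

theory Defs
  imports "HOL-Analysis.Analysis"
begin

definition proximity :: "'a set \<Rightarrow> ('a \<Rightarrow> 'a \<Rightarrow> real) \<Rightarrow> bool" where
  "proximity A \<kappa> \<longleftrightarrow>
     (\<forall>x\<in>A. \<forall>y\<in>A. \<forall>z\<in>A. \<kappa> x y + \<kappa> x z - \<kappa> y z \<le> \<kappa> x x) \<and>
     (\<forall>x\<in>A. \<forall>y\<in>A. y \<noteq> x \<longrightarrow> \<kappa> x y + \<kappa> x y - \<kappa> y y < \<kappa> x x)"

definition dmat :: "real^'n^'n \<Rightarrow> real^'n^'n" where
  "dmat K = (\<chi> x y. (K$x$x + K$y$y) / 2 - K$x$y)"

end

theory Submission
  imports Defs
begin

text \<open>The triangle inequality for a proximity \<open>\<kappa>\<close> is exactly the ordinary triangle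
inequality for \<open>d(x,y) = (\<kappa>(x,x) + \<kappa>(y,y))/2 - \<kappa>(x,y)\<close>; specialising it yields
\<open>d \<ge> 0\<close> and symmetry of \<open>d\<close>, so \<open>d\<close> is a semimetric, and then \<open>\<surd>d\<close> satisfies the
triangle inequality because \<open>\<surd>(a + b) \<le> \<surd>a + \<surd>b\<close>.\<close>

definition proximity_distance :: "('a \<Rightarrow> 'a \<Rightarrow> real) \<Rightarrow> 'a \<Rightarrow> 'a \<Rightarrow> real" where
  "proximity_distance \<kappa> x y = (\<kappa> x x + \<kappa> y y) / 2 - \<kappa> x y"

lemma proximity_distance_self [simp]: "proximity_distance \<kappa> x x = 0"
  by (simp add: proximity_distance_def)

lemma dmat_eq_proximity_distance:
  "dmat K $ x $ y = proximity_distance (\<lambda>x y. K $ x $ y) x y"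
  by (simp add: dmat_def proximity_distance_def)

lemma proximity_distance_triangle:
  assumes "proximity A \<kappa>" and "x \<in> A" "y \<in> A" "z \<in> A"
  shows "proximity_distance \<kappa> y z \<le> proximity_distance \<kappa> x y + proximity_distance \<kappa> x z"
proof -
  have "\<kappa> x y + \<kappa> x z - \<kappa> y z \<le> \<kappa> x x"
    using assms unfolding proximity_def by blast
  then show ?thesis
    by (simp add: proximity_distance_def field_simps)
qed

lemma proximity_distance_nonneg:
  assumes "proximity A \<kappa>" and "x \<in> A" "y \<in> A"
  shows "0 \<le> proximity_distance \<kappa> x y"
  using proximity_distance_triangle [OF assms(1,2,3,3)] by simp

lemma proximity_distance_commute:
  assumes "proximity A \<kappa>" and "x \<in> A" "y \<in> A"
  shows "proximity_distance \<kappa> x y = proximity_distance \<kappa> y x"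
  using proximity_distance_triangle [OF assms(1,3,2,3)]
    proximity_distance_triangle [OF assms(1,2,3,2)]
  by simp

lemma proximity_sqrt_distance_triangle:
  assumes "proximity A \<kappa>" and "x \<in> A" "y \<in> A" "z \<in> A"
  shows "sqrt (proximity_distance \<kappa> x z)
    \<le> sqrt (proximity_distance \<kappa> x y) + sqrt (proximity_distance \<kappa> y z)"
proof -
  let ?d = "proximity_distance \<kappa>"
  have "?d x z \<le> ?d x y + ?d y z"
    using proximity_distance_triangle [OF assms(1,3,2,4)]
      proximity_distance_commute [OF assms(1,2,3)] by simp
  then have "sqrt (?d x z) \<le> sqrt (?d x y + ?d y z)"
    by (rule real_sqrt_le_mono)
  also have "\<dots> \<le> sqrt (?d x y) + sqrt (?d y z)"
    using assms by (intro sqrt_add_le_add_sqrt proximity_distance_nonneg)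
  finally show ?thesis .
qed

theorem corollary1:
  fixes K :: "real^'n^'n"
  assumes "(\<exists>x y. dmat K $ x $ y < 0) \<or>
           (\<exists>x y z. sqrt (dmat K $ x $ y) + sqrt (dmat K $ y $ z) < sqrt (dmat K $ x $ z))"
  shows "\<not> proximity UNIV (\<lambda>x y. K $ x $ y)"
proof
  assume prox: "proximity UNIV (\<lambda>x y. K $ x $ y)"
  have "0 \<le> dmat K $ x $ y" for x y
    using proximity_distance_nonneg [OF prox] by (simp add: dmat_eq_proximity_distance)
  moreover have "sqrt (dmat K $ x $ z) \<le> sqrt (dmat K $ x $ y) + sqrt (dmat K $ y $ z)" for x y z
    using proximity_sqrt_distance_triangle [OF prox] by (simp add: dmat_eq_proximity_distance)
  ultimately show False
    using assms by (meson not_less)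
qed

end
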